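(* If $s$ is a normalized fully ternary string of length $n$ which is bad (in the sense defined in the context), then $d_{\rm g}(s)=n-2$.
   Context: Strings are finite words over $\{0,1,2,\dots\}$. A string is \emph{normalized} if no two adjacent symbols are equal; the \emph{normalization} of a string replaces every maximal run of identical symbols by a single copy. A string is \emph{fully $k$-ary} if the set of symbols occurring in it is exactly $\{0,\dots,k-1\}$; fully ternary means fully $3$-ary. For a normalized string $s=s_1\cdots s_n$ and $1\le i\le n$, the flip $f^{(i)}(s)$ is the normalization of $s_i\cdots s_1 s_{i+1}\cdots s_n$. The grouping distance $d_{\rm g}(s)$ of a normalized fully $k$-ary string is the minimum number of flips needed to transform $s$ into a string of length $k$. Regular-expression notation: $w^i$ is $i$ repetitions of $w$, $w^*$ is zero or more, $w^+$ one or more, $w^{\ge 2}$ two or more repetitions; $\{a,b\}$ denotes a single symbol that is either $a$ or $b$ (chosen independently at each occurrence). A normalized fully ternary string is \emph{bad} (for grouping) if, after some relabelling (bijection) of the symbols $\{0,1,2\}$, it is of one of the following types: (I) $0(12)^{\ge 2}$ or $02(12)^+$; (II) $(\{0,1\}2)^+$ or $(2\{0,1\})^+2$; (III) $0(21)^+02(12)^*$; (IV) one of the eight strings $210212$, $021012$, $0120212$, $1201212$, $02101212$, $20210212$, $020210212$, $120120212$. All other normalized fully ternary strings are \emph{good}. *)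

theory Defs
  imports Main
begin

definition normalized :: "nat list \<Rightarrow> bool" where
  "normalized s \<longleftrightarrow> (\<forall>i. Suc i < length s \<longrightarrow> s ! i \<noteq> s ! Suc i)"

definition normalize :: "nat list \<Rightarrow> nat list" where
  "normalize s = remdups_adj s"

definition fully_kary :: "nat \<Rightarrow> nat list \<Rightarrow> bool" where
  "fully_kary k s \<longleftrightarrow> set s = {0..<k}"

definition flip :: "nat \<Rightarrow> nat list \<Rightarrow> nat list" where
  "flip i s = normalize (rev (take i s) @ drop i s)"

definition flip_step :: "nat list \<Rightarrow> nat list \<Rightarrow> bool" where
  "flip_step s t \<longleftrightarrow> (\<exists>i. 1 \<le> i \<and> i \<le> length s \<and> t = flip i s)"

definition grouping_dist :: "nat list \<Rightarrow> nat" where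
  "grouping_dist s = (LEAST m. \<exists>t. (flip_step ^^ m) s t \<and> length t = card (set s))"

definition typeI :: "nat list \<Rightarrow> bool" where
  "typeI s \<longleftrightarrow>
     (\<exists>m\<ge>2. s = 0 # concat (replicate m [1,2])) \<or>
     (\<exists>m\<ge>1. s = [0,2] @ concat (replicate m [1,2]))"

definition typeII :: "nat list \<Rightarrow> bool" where
  "typeII s \<longleftrightarrow>
     (\<exists>xs. xs \<noteq> [] \<and> set xs \<subseteq> {0,1} \<and> s = concat (map (\<lambda>a. [a,2]) xs)) \<or>
     (\<exists>xs. xs \<noteq> [] \<and> set xs \<subseteq> {0,1} \<and> s = concat (map (\<lambda>a. [2,a]) xs) @ [2])"

definition typeIII :: "nat list \<Rightarrow> bool" where
  "typeIII s \<longleftrightarrow>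
     (\<exists>m p. m \<ge> 1 \<and> s = [0] @ concat (replicate m [2,1]) @ [0,2] @ concat (replicate p [1,2]))"

definition typeIV :: "nat list \<Rightarrow> bool" where
  "typeIV s \<longleftrightarrow> s \<in> {[2,1,0,2,1,2], [0,2,1,0,1,2], [0,1,2,0,2,1,2], [1,2,0,1,2,1,2],
                       [0,2,1,0,1,2,1,2], [2,0,2,1,0,2,1,2], [0,2,0,2,1,0,2,1,2],
                       [1,2,0,1,2,0,2,1,2]}"

definition bad :: "nat list \<Rightarrow> bool" where
  "bad s \<longleftrightarrow> normalized s \<and> fully_kary 3 s \<and>
     (\<exists>\<sigma>. bij_betw \<sigma> {0,1,2} {0,1,2} \<and>
        (typeI (map \<sigma> s) \<or> typeII (map \<sigma> s) \<or> typeIII (map \<sigma> s) \<or> typeIV (map \<sigma> s)))"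

end

theory Submission
  imports Defs
begin

(* A flip of a normalized string shortens it by at most one symbol, and it does so exactly when
   it turns a u a v into (rev u) a v. Grouping a string of length n therefore takes at least n - 3
   flips, and exactly n - 3 only along a chain of shortening flips. The bad strings, with type II
   relaxed to "every second symbol is 2, the last one included", are closed under shortening flips
   up to relabelling, and none of them has length 3; hence d_g(s) >= n - 2. Conversely, every
   normalized fully ternary string is grouped within n - 2 flips: if its first symbol recurs, the
   flip at the recurrence shortens it; otherwise s = a b c w with w alternating in b and c, one flip
   gives b a c w, and from there every two flips of length 3 delete two symbols of w. *)

lemma normalized_iff_distinct_adj: "normalized s \<longleftrightarrow> distinct_adj s"
  by (simp add: normalized_def distinct_adj_conv_nth)

lemma remdups_adj_map_inj_on:
  "inj_on f (set xs) \<Longrightarrow> remdups_adj (map f xs) = map f (remdups_adj xs)"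
  by (induction xs rule: remdups_adj.induct) (auto simp: inj_on_def)

lemma remdups_adj_append_distinct_adj:
  assumes "distinct_adj xs" "distinct_adj ys"
  shows "remdups_adj (xs @ ys) =
    (if xs \<noteq> [] \<and> ys \<noteq> [] \<and> last xs = hd ys then xs @ tl ys else xs @ ys)"
proof (cases "xs \<noteq> [] \<and> ys \<noteq> [] \<and> last xs = hd ys")
  case True
  then obtain xs' y ys' where xs: "xs = xs' @ [y]" and ys: "ys = y # ys'"
    by (metis list.collapse snoc_eq_iff_butlast)
  have "remdups_adj (xs @ ys) = remdups_adj (xs' @ [y]) @ tl (remdups_adj (y # ys'))"
    using remdups_adj_append[of xs' y "y # ys'"] by (simp add: xs ys)
  with assms show ?thesis by (simp add: True xs ys distinct_adj_altdef)
next
  case False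
  with assms show ?thesis
    unfolding if_not_P[OF False] by (simp add: remdups_adj_append' distinct_adj_altdef)
qed

lemma map_flip: "inj_on f (set x) \<Longrightarrow> map f (flip i x) = flip i (map f x)"
  unfolding flip_def normalize_def
  by (subst remdups_adj_map_inj_on[symmetric])
    (auto simp: rev_map take_map drop_map dest: in_set_takeD in_set_dropD intro: inj_on_subset)

lemma set_flip [simp]: "set (flip i x) = set x"
  by (metis flip_def normalize_def remdups_adj_set append_take_drop_id set_append set_rev)

lemma distinct_adj_flip [simp]: "distinct_adj (flip i x)"
  by (simp add: flip_def normalize_def)

lemma flip_distinct_adj:
  assumes "distinct_adj x"
  shows "flip i x = (if 0 < i \<and> i < length x \<and> x ! i = x ! 0
    then rev (take i x) @ tl (drop i x) else rev (take i x) @ drop i x)"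
proof -
  have "distinct_adj (rev (take i x))" "distinct_adj (drop i x)"
    using assms distinct_adj_append_iff[of "take i x" "drop i x"] by simp_all
  moreover have "rev (take i x) \<noteq> [] \<and> drop i x \<noteq> [] \<and> last (rev (take i x)) = hd (drop i x)
      \<longleftrightarrow> 0 < i \<and> i < length x \<and> x ! i = x ! 0"
    by (cases x) (auto simp: last_rev hd_drop_conv_nth)
  ultimately show ?thesis
    unfolding flip_def normalize_def by (simp only: remdups_adj_append_distinct_adj)
qed

lemma length_flip:
  "distinct_adj x \<Longrightarrow>
    length (flip i x) = (if 0 < i \<and> i < length x \<and> x ! i = x ! 0 then length x - 1 else length x)"
  by (auto simp: flip_distinct_adj)

lemma length_flip_ge: "distinct_adj x \<Longrightarrow> length x \<le> Suc (length (flip i x))"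
  by (auto simp: length_flip)

lemma flip_shortening:
  assumes "distinct_adj x" "length (flip i x) < length x"
  obtains a u v where "x = a # u @ a # v" and "flip i x = rev u @ a # v"
proof -
  have i: "0 < i" "i < length x" "x ! i = x ! 0"
    using assms length_flip[of x i] by (auto split: if_splits)
  define u where "u = tl (take i x)"
  define v where "v = drop (Suc i) x"
  have "take i x = x ! 0 # u"
    using i by (cases x) (auto simp: u_def take_Cons')
  moreover have "drop i x = x ! 0 # v"
    using i Cons_nth_drop_Suc[of i x] by (simp add: v_def)
  ultimately have "x = x ! 0 # u @ x ! 0 # v" and "flip i x = rev u @ x ! 0 # v"
    using flip_distinct_adj[OF assms(1), of i] i by (metis append_take_drop_id append_Cons, simp)
  then show ?thesis by (rule that)
qed

lemma flip_1: "distinct_adj x \<Longrightarrow> flip 1 x = x"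
  by (cases x) (auto simp: flip_distinct_adj distinct_adj_Cons hd_conv_nth)

definition groups_within :: "nat \<Rightarrow> nat list \<Rightarrow> bool" where
  "groups_within m s \<longleftrightarrow> (\<exists>t. (flip_step ^^ m) s t \<and> length t = card (set s))"

lemma grouping_dist_eqI:
  "groups_within m s \<Longrightarrow> (\<And>m'. groups_within m' s \<Longrightarrow> m \<le> m') \<Longrightarrow> grouping_dist s = m"
  unfolding grouping_dist_def groups_within_def[symmetric] by (rule Least_equality)

lemma groups_within_0: "distinct s \<Longrightarrow> groups_within 0 s"
  by (simp add: groups_within_def distinct_card)

lemma groups_within_flip:
  assumes "1 \<le> i" "i \<le> length s" "groups_within m (flip i s)"
  shows "groups_within (Suc m) s"
proof -
  have "flip_step s (flip i s)"
    using assms(1,2) by (auto simp: flip_step_def)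
  with assms(3) show ?thesis
    unfolding groups_within_def by (metis relpowp_Suc_I2 set_flip)
qed

lemma groups_within_alternating_tail:
  "distinct_adj (c # w) \<Longrightarrow> set w \<subseteq> {b, c} \<Longrightarrow> distinct [a, b, c] \<Longrightarrow>
    groups_within (length w) (b # a # c # w)"
proof (induction w rule: induct_list012)
  case 1
  then show ?case by (simp add: groups_within_0)
next
  case (2 x)
  then have "flip 3 [b, a, c, x] = [c, a, b]"
    by (auto simp: flip_def normalize_def numeral_eq_Suc)
  then show ?case
    using groups_within_flip[of 3 "[b, a, c, x]" 0] groups_within_0[of "[c, a, b]"] 2 by auto
next
  case (3 x y w)
  then have "x = b" "y = c" and "distinct_adj (c # w)"
    by (auto simp: distinct_adj_Cons)
  then have "flip 3 (b # a # c # x # y # w) = c # a # b # c # w"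
    and "flip 3 (c # a # b # c # w) = b # a # c # w"
    using "3.prems"(3) by (simp_all add: flip_distinct_adj numeral_eq_Suc)
  moreover have "groups_within (length w) (b # a # c # w)"
    using 3 \<open>distinct_adj (c # w)\<close> by simp
  ultimately show ?case
    using groups_within_flip[of 3 "c # a # b # c # w"] groups_within_flip[of 3 "b # a # c # x # y # w"]
    by simp
qed

lemma groups_within_length_minus_2:
  "distinct_adj s \<Longrightarrow> card (set s) = 3 \<Longrightarrow> groups_within (length s - 2) s"
proof (induction "length s" arbitrary: s rule: less_induct)
  case less
  have "length s \<ge> 3"
    using less.prems(2) card_length by metis
  show ?case
  proof (cases "length s = 3")
    case True
    then have "distinct s"
      using less.prems(2) card_distinct by metis
    then show ?thesis
      using groups_within_flip[of 1 s 0] groups_within_0 flip_1[OF less.prems(1)] True by simp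
  next
    case False
    show ?thesis
    proof (cases "\<exists>i. 0 < i \<and> i < length s \<and> s ! i = s ! 0")
      case True
      then obtain i where i: "0 < i" "i < length s" "s ! i = s ! 0"
        by blast
      then have "length (flip i s) = length s - 1"
        using length_flip[OF less.prems(1)] by simp
      then have "groups_within (length s - 3) (flip i s)"
        using less.hyps[of "flip i s"] less.prems i \<open>length s \<ge> 3\<close> by (simp add: numeral_eq_Suc)
      moreover have "length s - 2 = Suc (length s - 3)"
        using \<open>length s \<ge> 3\<close> by simp
      ultimately show ?thesis
        using groups_within_flip[of i s] i by simp
    next
      case no_recurrence: False
      obtain a b c w where s: "s = a # b # c # w"
        using \<open>length s \<ge> 3\<close> by (auto simp: numeral_3_eq_3 Suc_le_length_iff)
      have "a \<notin> set (b # c # w)"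
      proof
        assume "a \<in> set (b # c # w)"
        then obtain j where "j < length (b # c # w)" "(b # c # w) ! j = a"
          by (meson in_set_conv_nth)
        then have "0 < Suc j \<and> Suc j < length s \<and> s ! Suc j = s ! 0"
          by (simp add: s)
        with no_recurrence show False
          by blast
      qed
      moreover have "b \<noteq> c" and "distinct_adj (c # w)"
        using less.prems(1) by (simp_all add: s)
      moreover have "set (b # c # w) = {b, c}"
      proof (rule card_subset_eq[symmetric])
        show "card {b, c} = card (set (b # c # w))"
          using less.prems(2) \<open>a \<notin> set (b # c # w)\<close> \<open>b \<noteq> c\<close> by (simp add: s)
      qed (auto simp: s)
      ultimately have "groups_within (length w) (b # a # c # w)"
        by (intro groups_within_alternating_tail) auto
      moreover have "flip 2 s = b # a # c # w"
        using less.prems(1) \<open>a \<notin> set (b # c # w)\<close> by (simp add: s flip_distinct_adj numeral_eq_Suc)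
      ultimately show ?thesis
        using groups_within_flip[of 2 s] by (simp add: s)
    qed
  qed
qed

lemma flip_steps_length:
  assumes "distinct_adj s" "(flip_step ^^ m) s t"
  shows "distinct_adj t \<and> length s \<le> length t + m"
  using assms(2)
proof (induction m arbitrary: t)
  case 0
  then show ?case using assms(1) by simp
next
  case (Suc m)
  then obtain t' where steps: "(flip_step ^^ m) s t'" and "flip_step t' t"
    by (auto elim: relpowp_Suc_E)
  then obtain i where t: "t = flip i t'"
    by (auto simp: flip_step_def)
  have "distinct_adj t'" "length s \<le> length t' + m"
    using Suc.IH[OF steps] by auto
  then show ?case
    using length_flip_ge[of t' i] by (simp add: t)
qed

lemma flip_steps_tight_invariant:
  assumes step: "\<And>x i. P x \<Longrightarrow> length (flip i x) < length x \<Longrightarrow> P (flip i x)"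
    and P_distinct_adj: "\<And>x. P x \<Longrightarrow> distinct_adj x"
    and "P s" "(flip_step ^^ m) s t" "length s = length t + m"
  shows "P t"
  using assms(4,5)
proof (induction m arbitrary: t)
  case 0
  then show ?case using \<open>P s\<close> by simp
next
  case (Suc m)
  then obtain t' where steps: "(flip_step ^^ m) s t'" and "flip_step t' t"
    by (auto elim: relpowp_Suc_E)
  then obtain i where t: "t = flip i t'"
    by (auto simp: flip_step_def)
  have "distinct_adj t'" "length s \<le> length t' + m"
    using flip_steps_length[OF P_distinct_adj[OF \<open>P s\<close>] steps] by auto
  then have "length t < length t'" "length s = length t' + m"
    using Suc.prems(2) length_flip_ge[of t' i] by (auto simp: t)
  then show ?case
    using Suc.IH[OF steps] step by (auto simp: t)
qed

text \<open>Type II, relaxed to a property that visibly survives shortening flips; for normalized fully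
  ternary strings the two agree.\<close>

definition alternates_with_2 :: "nat list \<Rightarrow> bool" where
  "alternates_with_2 x \<longleftrightarrow> x \<noteq> [] \<and> last x = 2 \<and> successively (\<lambda>a b. a = 2 \<or> b = 2) x"

definition bad_pattern :: "nat list \<Rightarrow> bool" where
  "bad_pattern x \<longleftrightarrow> alternates_with_2 x \<or> typeI x \<or> typeIII x \<or> typeIV x"

lemma alternates_with_2_concat:
  "xs \<noteq> [] \<Longrightarrow> alternates_with_2 (concat (map (\<lambda>a. [a, 2]) xs))"
proof (induction xs)
  case (Cons y ys)
  then show ?case
    by (cases "ys = []") (auto simp: alternates_with_2_def successively_Cons)
qed simp

lemma typeII_imp_alternates_with_2: "typeII x \<Longrightarrow> alternates_with_2 x"
proof -
  have "concat (map (\<lambda>a. [2, a]) xs) @ [2] = 2 # concat (map (\<lambda>a. [a, 2]) xs)" for xs :: "nat list"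
    by (induction xs) auto
  moreover have "alternates_with_2 y \<Longrightarrow> alternates_with_2 (2 # y)" for y
    by (auto simp: alternates_with_2_def successively_Cons)
  ultimately show "typeII x \<Longrightarrow> alternates_with_2 x"
    unfolding typeII_def by (metis alternates_with_2_concat)
qed

lemma alternates_with_2_shorten:
  assumes "alternates_with_2 (a # u @ a # v)"
  shows "alternates_with_2 (rev u @ a # v)"
proof -
  let ?R = "\<lambda>a b :: nat. a = 2 \<or> b = 2"
  have R: "successively ?R (a # u @ a # v)" and "last (a # v) = 2"
    using assms by (auto simp: alternates_with_2_def)
  have "successively ?R (rev u @ a # v)"
  proof (cases "u = []")
    case True
    then show ?thesis using R by (auto simp: successively_Cons)
  next
    case False
    then have "successively ?R u" "successively ?R (a # v)" "?R (last u) a" "?R a (hd u)"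
      using R by (auto simp: successively_Cons successively_append_iff)
    moreover have "successively ?R (rev u)"
      using \<open>successively ?R u\<close> by (simp add: disj_commute)
    ultimately show ?thesis
      using False by (auto simp: successively_append_iff last_rev)
  qed
  with \<open>last (a # v) = 2\<close> show ?thesis
    by (simp add: alternates_with_2_def)
qed

lemma set_concat_replicate: "set (concat (replicate m [a, b])) \<subseteq> {a, b}"
  by (induction m) auto

lemma rev_concat_replicate: "rev (concat (replicate m [a, b])) = concat (replicate m [b, a])"
  by (simp add: rev_concat)

lemma typeI_hd_notin_tl: "typeI x \<Longrightarrow> hd x \<notin> set (tl x)"
  using set_concat_replicate[of _ "1 :: nat" 2] unfolding typeI_def by auto

lemma typeIII_shorten:
  assumes "typeIII (a # u @ a # v)"
  shows "alternates_with_2 (rev u @ a # v)"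
proof -
  obtain m p where
    eq: "a # u @ a # v = 0 # concat (replicate m [2, 1]) @ 0 # 2 # concat (replicate p [1, 2])"
    using assms unfolding typeIII_def by auto
  have "0 \<notin> set (concat (replicate m [2, 1 :: nat]))" "0 \<notin> set (2 # concat (replicate p [1, 2 :: nat]))"
    using set_concat_replicate[of m "2 :: nat" 1] set_concat_replicate[of p "1 :: nat" 2] by auto
  moreover have "a = 0" and "concat (replicate m [2, 1]) @ 0 # 2 # concat (replicate p [1, 2]) = u @ 0 # v"
    using eq by auto
  ultimately have "u = concat (replicate m [2, 1])" "v = 2 # concat (replicate p [1, 2])"
    using append_Cons_eq_iff by metis+
  with \<open>a = 0\<close> have "rev u @ a # v = concat (map (\<lambda>a. [a, 2]) (replicate m 1 @ 0 # replicate p 1))"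
    by (simp add: rev_concat_replicate)
  then show ?thesis
    using alternates_with_2_concat[of "replicate m 1 @ 0 # replicate p 1"] by simp
qed

lemma typeI_01212: "typeI [0, 1, 2, 1, 2]"
  unfolding typeI_def by (rule disjI1, rule exI[of _ 2]) (simp add: numeral_eq_Suc)

lemma typeIII_02102: "typeIII [0, 2, 1, 0, 2]"
  unfolding typeIII_def by (rule exI[of _ 1], rule exI[of _ 0]) simp

lemma typeIII_0210212: "typeIII [0, 2, 1, 0, 2, 1, 2]"
  unfolding typeIII_def by (rule exI[of _ 1], rule exI[of _ 1]) simp

lemma typeIV_shorten:
  assumes "typeIV (a # u @ a # v)"
  shows "bad_pattern (rev u @ a # v) \<or> bad_pattern (map (id(0 := 1, 1 := 0)) (rev u @ a # v))"
proof -
  define x where "x = a # u @ a # v"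
  define k where "k = length u"
  have uv: "rev u @ a # v = rev (take k (tl x)) @ hd x # drop (k + 2) x"
    and k: "Suc k < length x" "x ! Suc k = hd x"
    by (simp_all add: x_def k_def nth_append)
  have "x = [2,1,0,2,1,2] \<or> x = [0,2,1,0,1,2] \<or> x = [0,1,2,0,2,1,2] \<or> x = [1,2,0,1,2,1,2] \<or>
      x = [0,2,1,0,1,2,1,2] \<or> x = [2,0,2,1,0,2,1,2] \<or> x = [0,2,0,2,1,0,2,1,2] \<or>
      x = [1,2,0,1,2,0,2,1,2]"
    using assms unfolding x_def typeIV_def by simp
  moreover from this have "k = 0 \<or> k = 1 \<or> k = 2 \<or> k = 3 \<or> k = 4 \<or> k = 5 \<or> k = 6 \<or> k = 7"
    using k(1) by auto
  ultimately show ?thesis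
    using k unfolding uv
    \<comment> \<open>the simplifier writes the symbol 1 of the computed strings as \<open>Suc 0\<close>\<close>
    by (elim disjE; simp add: bad_pattern_def alternates_with_2_def typeIV_def
      typeI_01212[unfolded One_nat_def] typeIII_02102[unfolded One_nat_def]
      typeIII_0210212[unfolded One_nat_def])
qed

lemma bad_pattern_shorten:
  assumes "bad_pattern (a # u @ a # v)"
  shows "\<exists>\<tau>. bij_betw \<tau> {0, 1, 2} {0, 1, 2} \<and> bad_pattern (map \<tau> (rev u @ a # v))"
proof -
  let ?y = "rev u @ a # v" and ?swap = "id(0 := 1, 1 := 0) :: nat \<Rightarrow> nat"
  from assms consider "alternates_with_2 (a # u @ a # v)" | "typeI (a # u @ a # v)"
    | "typeIII (a # u @ a # v)" | "typeIV (a # u @ a # v)"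
    unfolding bad_pattern_def by blast
  then have "bad_pattern ?y \<or> bad_pattern (map ?swap ?y)"
  proof cases
    case 2
    then show ?thesis using typeI_hd_notin_tl by fastforce
  qed (use alternates_with_2_shorten typeIII_shorten typeIV_shorten in \<open>auto simp: bad_pattern_def\<close>)
  moreover have "bij_betw ?swap {0, 1, 2} {0, 1, 2}"
    by (auto simp: bij_betw_def inj_on_def)
  ultimately show ?thesis
    by (metis bij_betw_id list.map_id)
qed

lemma bad_pattern_length_ne_3:
  assumes "set x = {0, 1, 2}" "bad_pattern x"
  shows "length x \<noteq> 3"
proof
  assume len: "length x = 3"
  from assms(2) consider "alternates_with_2 x" | "typeI x" | "typeIII x" | "typeIV x"
    unfolding bad_pattern_def by blast
  then show False
  proof cases
    case 1
    obtain p q r where "x = [p, q, r]"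
      using len by (auto simp: length_Suc_conv numeral_3_eq_3)
    with 1 have "set x \<subseteq> {p, 2} \<or> set x \<subseteq> {q, 2}"
      by (auto simp: alternates_with_2_def)
    with assms(1) show False
      by auto
  qed (use len in \<open>auto simp: typeI_def typeIII_def typeIV_def length_concat sum_list_replicate\<close>)
qed

definition relabelled_bad :: "nat list \<Rightarrow> bool" where
  "relabelled_bad s \<longleftrightarrow> distinct_adj s \<and> set s = {0, 1, 2} \<and>
     (\<exists>\<sigma>. bij_betw \<sigma> {0, 1, 2} {0, 1, 2} \<and> bad_pattern (map \<sigma> s))"

lemma bad_imp_relabelled_bad: "bad s \<Longrightarrow> relabelled_bad s"
  unfolding bad_def relabelled_bad_def bad_pattern_def fully_kary_def normalized_iff_distinct_adj
  using typeII_imp_alternates_with_2 by (auto simp: atLeast0_lessThan_Suc numeral_eq_Suc insert_commute)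

lemma relabelled_bad_relabel:
  assumes "relabelled_bad s"
  obtains \<sigma> where "bij_betw \<sigma> {0, 1, 2} {0, 1, 2}" "bad_pattern (map \<sigma> s)"
    and "inj_on \<sigma> (set s)" "set (map \<sigma> s) = {0, 1, 2}" "distinct_adj (map \<sigma> s)"
proof -
  obtain \<sigma> where \<sigma>: "bij_betw \<sigma> {0, 1, 2} {0, 1, 2}" "bad_pattern (map \<sigma> s)"
    and s: "distinct_adj s" "set s = {0, 1, 2}"
    using assms unfolding relabelled_bad_def by blast
  then have "inj_on \<sigma> (set s)" "set (map \<sigma> s) = {0, 1, 2}"
    by (simp_all add: bij_betw_def)
  with \<sigma> s show ?thesis
    using that distinct_adj_mapI by blast
qed

lemma relabelled_bad_flip:
  assumes "relabelled_bad s" "length (flip i s) < length s"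
  shows "relabelled_bad (flip i s)"
proof -
  obtain \<sigma> where \<sigma>: "bij_betw \<sigma> {0, 1, 2} {0, 1, 2}" "bad_pattern (map \<sigma> s)"
    and inj: "inj_on \<sigma> (set s)" and "distinct_adj (map \<sigma> s)"
    using assms(1) by (rule relabelled_bad_relabel)
  moreover have "length (flip i (map \<sigma> s)) < length (map \<sigma> s)"
    using assms(2) map_flip[OF inj] by (metis length_map)
  ultimately obtain a u v where "map \<sigma> s = a # u @ a # v" "map \<sigma> (flip i s) = rev u @ a # v"
    using flip_shortening map_flip[OF inj] by metis
  then obtain \<tau> where "bij_betw \<tau> {0, 1, 2} {0, 1, 2}" "bad_pattern (map (\<tau> \<circ> \<sigma>) (flip i s))"
    using bad_pattern_shorten \<sigma>(2) by (metis map_map)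
  with \<sigma>(1) assms(1) show ?thesis
    unfolding relabelled_bad_def by (auto intro: bij_betw_trans)
qed

lemma relabelled_bad_length_ne_3: "relabelled_bad s \<Longrightarrow> length s \<noteq> 3"
  by (metis relabelled_bad_relabel bad_pattern_length_ne_3 length_map)

lemma relabelled_bad_groups_within:
  assumes "relabelled_bad s" "groups_within m s"
  shows "length s - 2 \<le> m"
proof -
  obtain t where steps: "(flip_step ^^ m) s t" and "length t = 3"
    using assms unfolding groups_within_def relabelled_bad_def by auto
  have "length s \<noteq> length t + m"
  proof
    assume "length s = length t + m"
    then have "relabelled_bad t"
      using flip_steps_tight_invariant[of relabelled_bad, OF _ _ assms(1) steps] relabelled_bad_flip
      by (auto simp: relabelled_bad_def)
    with \<open>length t = 3\<close> show False
      using relabelled_bad_length_ne_3 by blast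
  qed
  moreover have "length s \<le> length t + m"
    using assms(1) steps flip_steps_length by (auto simp: relabelled_bad_def)
  ultimately show ?thesis
    using \<open>length t = 3\<close> by simp
qed

theorem lemma3p4:
  fixes s :: "nat list" and n :: nat
  assumes "normalized s" and "fully_kary 3 s" and "length s = n" and "bad s"
  shows "grouping_dist s = n - 2"
proof (rule grouping_dist_eqI)
  have "card (set s) = 3"
    using assms(2) by (simp add: fully_kary_def)
  then show "groups_within (n - 2) s"
    using groups_within_length_minus_2[of s] assms(1,3) by (simp add: normalized_iff_distinct_adj)
  show "n - 2 \<le> m" if "groups_within m s" for m
    using relabelled_bad_groups_within[OF bad_imp_relabelled_bad[OF assms(4)] that] assms(3) by simp
qed

end
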